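(* Let $(M,d)$ be a metric space, $\mathsf{P}\subseteq M$ a set of $n$ points, and $1\le\ell\le k\le n$ integers with $\ell\mid k$; put $m=k/\ell$. Let $Q=\{q_1,\dots,q_m\}$ be the output of Gonzalez's algorithm on $\mathsf{P}$ with $m$ centers, and let $C\subseteq\mathsf{P}$ with $|C|=k$ and $C\supseteq\bigcup_{i=1}^m N_{\mathsf{P}}(q_i,\ell)$. Then $\max_{p\in\mathsf{P}} d_C(p,\ell)\le 3\,r_{\mathrm{opt}}$, where $r_{\mathrm{opt}}=\min_{C'\subseteq\mathsf{P},|C'|=k}\max_{p\in\mathsf{P}} d_{C'}(p,\ell)$.
   Context: Gonzalez's algorithm with $m$ centers: $q_1\in\mathsf{P}$ is arbitrary, and for $i=2,\dots,m$, $q_i$ is a point of $\mathsf{P}$ maximizing $d(p,\{q_1,\dots,q_{i-1}\})$ over $p\in\mathsf{P}$. For a finite $S\subseteq M$ and $1\le i\le|S|$, $d_S(p,i)$ is the radius of the smallest closed ball centered at $p$ containing at least $i$ points of $S$; nearest neighbors are ordered lexicographically by $(d(p,s),\text{index of }s)$ and $N_S(p,i)$ is the set of the first $i$ points of $S$ in this order, $|N_S(p,i)|=i$. *)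

theory Defs
  imports "HOL-Analysis.Analysis"
begin

definition dist_set :: "('a \<Rightarrow> 'a \<Rightarrow> real) \<Rightarrow> 'a \<Rightarrow> 'a set \<Rightarrow> real" where
  "dist_set d p A = Min ((d p) ` A)"

definition kdist :: "('a \<Rightarrow> 'a \<Rightarrow> real) \<Rightarrow> 'a set \<Rightarrow> 'a \<Rightarrow> nat \<Rightarrow> real" where
  "kdist d S p i = Inf {r::real. 0 \<le> r \<and> i \<le> card {s \<in> S. d p s \<le> r}}"

definition nn_less :: "('a \<Rightarrow> 'a \<Rightarrow> real) \<Rightarrow> ('a \<Rightarrow> nat) \<Rightarrow> 'a \<Rightarrow> 'a \<Rightarrow> 'a \<Rightarrow> bool" where
  "nn_less d idx p t s \<longleftrightarrow> d p t < d p s \<or> (d p t = d p s \<and> idx t < idx s)"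

text \<open>N_S(p,i): the first i points of S in this order.\<close>
definition knn :: "('a \<Rightarrow> 'a \<Rightarrow> real) \<Rightarrow> ('a \<Rightarrow> nat) \<Rightarrow> 'a set \<Rightarrow> 'a \<Rightarrow> nat \<Rightarrow> 'a set" where
  "knn d idx S p i = {s \<in> S. card {t \<in> S. nn_less d idx p t s} < i}"

text \<open>q_1,...,q_m is a possible output of Gonzalez's algorithm on P with m centers.\<close>
definition gonzalez :: "('a \<Rightarrow> 'a \<Rightarrow> real) \<Rightarrow> 'a set \<Rightarrow> nat \<Rightarrow> (nat \<Rightarrow> 'a) \<Rightarrow> bool" where
  "gonzalez d P m q \<longleftrightarrow> q 1 \<in> P \<and>
     (\<forall>i \<in> {2..m}. q i \<in> P \<and>
        (\<forall>p \<in> P. dist_set d p (q ` {1..<i}) \<le> dist_set d (q i) (q ` {1..<i})))"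

definition r_opt :: "('a \<Rightarrow> 'a \<Rightarrow> real) \<Rightarrow> 'a set \<Rightarrow> nat \<Rightarrow> nat \<Rightarrow> real" where
  "r_opt d P k l = Min {Max ((\<lambda>p. kdist d C' p l) ` P) | C'. C' \<subseteq> P \<and> card C' = k}"

end

theory Submission
  imports Defs
begin

text \<open>Let \<open>D\<close> be an optimal set, \<open>r = r_opt\<close>, so every point of \<open>P\<close> has \<open>\<ell>\<close> points of \<open>D\<close>
  within distance \<open>r\<close>. If some \<open>p \<in> P\<close> were farther than \<open>2r\<close> from all Gonzalez centres, then by
  the farthest-point rule \<open>p, q\<^sub>1, \<dots>, q\<^sub>m\<close> would be pairwise more than \<open>2r\<close> apart, so their
  \<open>r\<close>-balls would contain \<open>(m + 1) \<ell> > k = |D|\<close> distinct points of \<open>D\<close>. Hence some \<open>q\<^sub>i\<close> lies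
  within \<open>2r\<close> of \<open>p\<close>; the \<open>\<ell>\<close> nearest neighbours of \<open>q\<^sub>i\<close> lie in \<open>C\<close> and within
  \<open>d\<^sub>P(q\<^sub>i, \<ell>) \<le> d\<^sub>D(q\<^sub>i, \<ell>) \<le> r\<close> of \<open>q\<^sub>i\<close>, so \<open>d\<^sub>C(p, \<ell>) \<le> 2r + r\<close>.\<close>

lemma kdist_attained:
  assumes "finite S" and "i \<le> card S"
  shows "kdist d S p i \<in> {r. 0 \<le> r \<and> i \<le> card {s \<in> S. d p s \<le> r}}"
proof -
  define A where "A = {r::real. 0 \<le> r \<and> i \<le> card {s \<in> S. d p s \<le> r}}"
  define W where "W = insert 0 (d p ` S)"
  have "finite W" using assms(1) W_def by auto
  \<comment> \<open>a feasible radius can be lowered to a candidate in the finite set \<open>W\<close>, so the infimum is a minimum\<close>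
  have shrink: "Max {w \<in> W. w \<le> r} \<in> A \<inter> W \<and> Max {w \<in> W. w \<le> r} \<le> r" if "r \<in> A" for r
  proof -
    let ?r' = "Max {w \<in> W. w \<le> r}"
    have fin: "finite {w \<in> W. w \<le> r}" using \<open>finite W\<close> by auto
    have "0 \<in> {w \<in> W. w \<le> r}" using that unfolding A_def W_def by auto
    then have mem: "?r' \<in> {w \<in> W. w \<le> r}" and "0 \<le> ?r'"
      using Max_in[OF fin] Max_ge[OF fin] by auto
    have "{s \<in> S. d p s \<le> ?r'} = {s \<in> S. d p s \<le> r}"
    proof (intro Collect_cong conj_cong refl iffI)
      fix s assume "s \<in> S" "d p s \<le> r"
      then show "d p s \<le> ?r'" using Max_ge[OF fin] unfolding W_def by auto
    qed (use mem in auto)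
    then show ?thesis using that mem \<open>0 \<le> ?r'\<close> unfolding A_def by simp
  qed
  have "{s \<in> S. d p s \<le> Max W} = S" using \<open>finite W\<close> unfolding W_def by auto
  then have "Max W \<in> A" using assms \<open>finite W\<close> unfolding A_def W_def by auto
  then have ne: "A \<inter> W \<noteq> {}" using shrink by blast
  have fin: "finite (A \<inter> W)" using \<open>finite W\<close> by auto
  have "Inf A = Min (A \<inter> W)"
  proof (rule cInf_eq_minimum)
    show "Min (A \<inter> W) \<in> A" using Min_in[OF fin ne] by auto
    show "Min (A \<inter> W) \<le> x" if "x \<in> A" for x
      using shrink[OF that] Min_le[OF fin] by fastforce
  qed
  then show ?thesis using Min_in[OF fin ne] unfolding kdist_def A_def by auto
qed

lemma kdist_le:
  assumes "0 \<le> r" and "i \<le> card {s \<in> S. d p s \<le> r}"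
  shows "kdist d S p i \<le> r"
  unfolding kdist_def
  by (rule cInf_lower) (use assms in \<open>auto intro: bdd_belowI[of _ 0]\<close>)

lemma kdist_le_iff:
  assumes "finite S" and "i \<le> card S"
  shows "kdist d S p i \<le> r \<longleftrightarrow> 0 \<le> r \<and> i \<le> card {s \<in> S. d p s \<le> r}"
proof
  assume le: "kdist d S p i \<le> r"
  have "0 \<le> kdist d S p i" and card: "i \<le> card {s \<in> S. d p s \<le> kdist d S p i}"
    using kdist_attained[OF assms, of d p] by simp_all
  have "card {s \<in> S. d p s \<le> kdist d S p i} \<le> card {s \<in> S. d p s \<le> r}"
    using assms(1) le by (intro card_mono) force+
  then show "0 \<le> r \<and> i \<le> card {s \<in> S. d p s \<le> r}"
    using \<open>0 \<le> kdist d S p i\<close> card le by linarith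
next
  assume "0 \<le> r \<and> i \<le> card {s \<in> S. d p s \<le> r}"
  then show "kdist d S p i \<le> r" by (intro kdist_le) simp_all
qed

lemma kdist_antimono:
  assumes "finite T" and "S \<subseteq> T" and "i \<le> card S"
  shows "kdist d T p i \<le> kdist d S p i"
proof -
  have "finite S" using assms finite_subset by blast
  have "i \<le> card T" using assms(3) card_mono[OF assms(1,2)] by linarith
  have "card {s \<in> S. d p s \<le> kdist d S p i} \<le> card {s \<in> T. d p s \<le> kdist d S p i}"
    using assms by (intro card_mono) auto
  then show ?thesis
    using kdist_attained[OF \<open>finite S\<close> assms(3), of d p]
    by (simp add: kdist_le_iff[OF assms(1) \<open>i \<le> card T\<close>])
qed

lemma card_knn:
  assumes "finite P" and "inj_on idx P" and "l \<le> card P"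
  shows "card (knn d idx P x l) = l"
proof -
  let ?less = "nn_less d idx x"
  define rank where "rank s = card {t \<in> P. ?less t s}" for s
  have trans: "?less a c" if "?less a b" "?less b c" for a b c
    using that unfolding nn_less_def by auto
  have irrefl: "\<not> ?less a a" for a unfolding nn_less_def by auto
  have total: "?less a b \<or> ?less b a" if "a \<in> P" "b \<in> P" "a \<noteq> b" for a b
  proof -
    have "idx a \<noteq> idx b" using assms(2) that by (auto dest: inj_onD)
    then show ?thesis unfolding nn_less_def by (cases "d x a < d x b"; cases "d x b < d x a"; auto)
  qed
  have rank_less: "rank a < rank b" if "a \<in> P" "b \<in> P" "?less a b" for a b
  proof -
    have "{t \<in> P. ?less t a} \<subset> {t \<in> P. ?less t b}" using that trans irrefl by blast
    then show ?thesis unfolding rank_def using assms(1) by (auto intro: psubset_card_mono)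
  qed
  have inj: "inj_on rank P"
  proof (rule inj_onI)
    fix a b assume "a \<in> P" "b \<in> P" "rank a = rank b"
    then show "a = b" using total rank_less by (metis less_irrefl)
  qed
  have "rank ` P \<subseteq> {..<card P}"
  proof
    fix y assume "y \<in> rank ` P"
    then obtain s where s: "s \<in> P" "y = rank s" by auto
    have "{t \<in> P. ?less t s} \<subset> P" using s irrefl by blast
    then show "y \<in> {..<card P}" using s assms(1) unfolding rank_def by (auto intro: psubset_card_mono)
  qed
  then have rank_image: "rank ` P = {..<card P}"
    using card_subset_eq[OF _ \<open>rank ` P \<subseteq> _\<close>] card_image[OF inj] by auto
  have "rank ` {s \<in> P. rank s < l} = {..<l}"
  proof
    show "{..<l} \<subseteq> rank ` {s \<in> P. rank s < l}"
    proof
      fix y assume y: "y \<in> {..<l}"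
      then have "y \<in> rank ` P" using rank_image assms(3) by auto
      then obtain s where "s \<in> P" "y = rank s" by auto
      then show "y \<in> rank ` {s \<in> P. rank s < l}" using y by auto
    qed
  qed auto
  moreover have "knn d idx P x l = {s \<in> P. rank s < l}" unfolding knn_def rank_def by simp
  moreover have "inj_on rank {s \<in> P. rank s < l}" using inj by (auto intro: inj_on_subset)
  ultimately show ?thesis using card_image[of rank "{s \<in> P. rank s < l}"] by simp
qed

lemma knn_within_kdist:
  assumes "finite P" and "l \<le> card P" and "s \<in> knn d idx P x l"
  shows "d x s \<le> kdist d P x l"
proof (rule ccontr)
  assume "\<not> ?thesis"
  then have "{t \<in> P. d x t \<le> kdist d P x l} \<subseteq> {t \<in> P. nn_less d idx x t s}"
    unfolding nn_less_def by auto
  then have "card {t \<in> P. d x t \<le> kdist d P x l} \<le> card {t \<in> P. nn_less d idx x t s}"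
    using assms(1) by (auto intro: card_mono)
  moreover have "card {t \<in> P. nn_less d idx x t s} < l" using assms(3) unfolding knn_def by auto
  ultimately show False using kdist_attained[OF assms(1,2), of d x] by auto
qed

lemma dist_set_attained:
  assumes "finite A" and "A \<noteq> {}"
  obtains a where "a \<in> A" and "dist_set d p A = d p a"
proof -
  have "dist_set d p A \<in> d p ` A" unfolding dist_set_def using assms by (intro Min_in) auto
  then show thesis using that by auto
qed

lemma gonzalez_in:
  assumes "gonzalez d P m q" and "j \<in> {1..m}"
  shows "q j \<in> P"
  using assms unfolding gonzalez_def by (cases "j = 1") auto

lemma gonzalez_dist_set_le:
  assumes "gonzalez d P m q" and "p \<in> P" and "1 \<le> b" "b < a" "a \<le> m"
  shows "dist_set d p (q ` {1..m}) \<le> d (q a) (q b)"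
proof -
  have "a \<in> {2..m}" and ne: "d p ` q ` {1..<a} \<noteq> {}" using assms(3-5) by auto
  have "dist_set d p (q ` {1..m}) \<le> dist_set d p (q ` {1..<a})"
    unfolding dist_set_def using assms(5) ne by (intro Min_antimono) auto
  also have "\<dots> \<le> dist_set d (q a) (q ` {1..<a})"
    using assms(1,2) \<open>a \<in> {2..m}\<close> unfolding gonzalez_def by blast
  also have "\<dots> \<le> d (q a) (q b)"
    unfolding dist_set_def using assms(3,4) by (auto intro: Min_le)
  finally show ?thesis .
qed

context Metric_space
begin

lemma card_disjoint_balls_le:
  assumes "finite D" and "D \<subseteq> M" and "finite I" and "x ` I \<subseteq> M"
    and separated: "\<And>a b. a \<in> I \<Longrightarrow> b \<in> I \<Longrightarrow> a \<noteq> b \<Longrightarrow> 2 * r < d (x a) (x b)"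
    and full: "\<And>a. a \<in> I \<Longrightarrow> l \<le> card {s \<in> D. d (x a) s \<le> r}"
  shows "card I * l \<le> card D"
proof -
  define B where "B a = {s \<in> D. d (x a) s \<le> r}" for a
  have disjoint: "B a \<inter> B b = {}" if "a \<in> I" "b \<in> I" "a \<noteq> b" for a b
  proof (rule equals0I)
    fix s assume s: "s \<in> B a \<inter> B b"
    then have "d (x a) (x b) \<le> d (x a) s + d s (x b)"
      using assms(2,4) that by (intro triangle) (auto simp: B_def)
    also have "\<dots> \<le> 2 * r" using s commute unfolding B_def by auto
    finally show False using separated[OF that] by simp
  qed
  have "card I * l = (\<Sum>a\<in>I. l)" by simp
  also have "\<dots> \<le> (\<Sum>a\<in>I. card (B a))" using full unfolding B_def by (intro sum_mono) auto
  also have "\<dots> = card (\<Union>a\<in>I. B a)"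
    using disjoint assms(1,3) by (intro card_UN_disjoint[symmetric]) (auto simp: B_def)
  also have "\<dots> \<le> card D" using assms(1) by (intro card_mono) (auto simp: B_def)
  finally show ?thesis .
qed

lemma gonzalez_covering_radius:
  assumes "gonzalez d P m q" and "P \<subseteq> M" and "p \<in> P"
    and "finite D" and "D \<subseteq> M" and "card D < Suc m * l"
    and full: "\<And>x. x \<in> P \<Longrightarrow> l \<le> card {s \<in> D. d x s \<le> r}"
  shows "dist_set d p (q ` {1..m}) \<le> 2 * r"
proof (rule ccontr)
  let ?\<delta> = "dist_set d p (q ` {1..m})"
  assume far: "\<not> ?\<delta> \<le> 2 * r"
  define x where "x a = (if a = 0 then p else q a)" for a
  have xP: "x a \<in> P" if "a \<in> {0..m}" for a
    using that assms(3) gonzalez_in[OF assms(1)] unfolding x_def by auto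
  have ordered: "?\<delta> \<le> d (x a) (x b)" if ab: "a \<in> {0..m}" "b < a" for a b
  proof (cases "b = 0")
    case True
    have "?\<delta> \<le> d p (q a)" unfolding dist_set_def using ab by (intro Min_le) auto
    then show ?thesis using True ab commute[of p "q a"] unfolding x_def by simp
  next
    case False
    then show ?thesis using ab gonzalez_dist_set_le[OF assms(1,3), of b a] unfolding x_def by simp
  qed
  have sep: "2 * r < d (x a) (x b)" if "a \<in> {0..m}" "b \<in> {0..m}" "a \<noteq> b" for a b
  proof -
    have "?\<delta> \<le> d (x a) (x b)"
    proof (cases "b < a")
      case True
      then show ?thesis using ordered that(1) by blast
    next
      case False
      then have "b > a" using that(3) by simp
      then show ?thesis using ordered[OF that(2)] commute[of "x a" "x b"] by simp
    qed
    then show ?thesis using far by simp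
  qed
  have "x ` {0..m} \<subseteq> M" using xP assms(2) by auto
  then have "card {0..m} * l \<le> card D"
    by (rule card_disjoint_balls_le[OF assms(4,5) finite_atLeastAtMost _ sep full[OF xP]])
  then show False using assms(6) by simp
qed

lemma kdist_le_dist_plus_kdist:
  assumes "finite P" and "P \<subseteq> M" and "inj_on idx P" and "l \<le> card P"
    and "c \<in> P" and "p \<in> M" and "finite C" and "knn d idx P c l \<subseteq> C"
  shows "kdist d C p l \<le> d p c + kdist d P c l"
proof (rule kdist_le)
  show "0 \<le> d p c + kdist d P c l" using kdist_attained[OF assms(1,4), of d c] by auto
  have sub: "knn d idx P c l \<subseteq> {s \<in> C. d p s \<le> d p c + kdist d P c l}"
  proof
    fix s assume s: "s \<in> knn d idx P c l"
    have "s \<in> P" using s unfolding knn_def by auto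
    then have "d p s \<le> d p c + d c s" using assms(2,5,6) by (intro triangle) auto
    also have "d c s \<le> kdist d P c l" using knn_within_kdist[OF assms(1,4) s] .
    finally show "s \<in> {s \<in> C. d p s \<le> d p c + kdist d P c l}" using s assms(8) by auto
  qed
  then show "l \<le> card {s \<in> C. d p s \<le> d p c + kdist d P c l}"
    using card_mono[OF _ sub] card_knn[OF assms(1,3,4)] assms(7) by simp
qed

end

lemma r_opt_attained:
  assumes "finite P" and "k \<le> card P"
  obtains D where "D \<subseteq> P" and "card D = k" and "r_opt d P k l = Max ((\<lambda>p. kdist d D p l) ` P)"
proof -
  let ?cost = "\<lambda>C'. Max ((\<lambda>p. kdist d C' p l) ` P)"
  let ?R = "{?cost C' | C'. C' \<subseteq> P \<and> card C' = k}"
  have "?R \<subseteq> ?cost ` Pow P" by blast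
  then have "finite ?R" using assms(1) by (meson finite_Pow_iff finite_imageI finite_subset)
  moreover obtain T where "T \<subseteq> P" "card T = k" using obtain_subset_with_card_n[OF assms(2)] by metis
  then have "?R \<noteq> {}" by blast
  ultimately have "r_opt d P k l \<in> ?R" unfolding r_opt_def by (rule Min_in)
  then obtain D where "D \<subseteq> P" "card D = k" "r_opt d P k l = ?cost D" by blast
  then show thesis by (rule that)
qed

theorem mainTheorem11:
  fixes M :: "'a set" and d :: "'a \<Rightarrow> 'a \<Rightarrow> real" and P C :: "'a set"
    and idx :: "'a \<Rightarrow> nat" and k l m :: nat and q :: "nat \<Rightarrow> 'a"
  assumes "Metric_space M d"
    and "finite P" and "P \<subseteq> M"
    and "inj_on idx P"
    and "1 \<le> l" and "l \<le> k" and "k \<le> card P" and "l dvd k"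
    and "m = k div l"
    and "gonzalez d P m q"
    and "C \<subseteq> P" and "card C = k"
    and "(\<Union>i\<in>{1..m}. knn d idx P (q i) l) \<subseteq> C"
  shows "Max ((\<lambda>p. kdist d C p l) ` P) \<le> 3 * r_opt d P k l"
proof -
  interpret Metric_space M d by fact
  let ?r = "r_opt d P k l"
  have "k = m * l" using assms(8,9) by simp
  then have "1 \<le> m" using assms(5,6) by (cases m) auto
  obtain D where D: "D \<subseteq> P" "card D = k" and r: "?r = Max ((\<lambda>p. kdist d D p l) ` P)"
    using r_opt_attained[OF assms(2,7)] .
  have "finite D" "finite C" using D(1) assms(2,11) finite_subset by auto
  have Dr: "kdist d D x l \<le> ?r" if "x \<in> P" for x
    unfolding r using that assms(2) by (intro Max_ge) auto
  have full: "l \<le> card {s \<in> D. d x s \<le> ?r}" if "x \<in> P" for x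
    using Dr[OF that] kdist_le_iff[OF \<open>finite D\<close>] D(2) assms(6) by simp
  have "kdist d C p l \<le> 3 * ?r" if p: "p \<in> P" for p
  proof -
    obtain c where c: "c \<in> q ` {1..m}" and "dist_set d p (q ` {1..m}) = d p c"
      using dist_set_attained[of "q ` {1..m}" d p] \<open>1 \<le> m\<close> by auto
    moreover have "card D < Suc m * l" using D(2) \<open>k = m * l\<close> assms(5) by simp
    ultimately have "d p c \<le> 2 * ?r"
      using gonzalez_covering_radius[OF assms(10,3) p \<open>finite D\<close> _ _ full] D(1) assms(3) by auto
    have "c \<in> P" using c gonzalez_in[OF assms(10)] by auto
    have "knn d idx P c l \<subseteq> C" using c assms(13) by auto
    then have "kdist d C p l \<le> d p c + kdist d P c l"
      using kdist_le_dist_plus_kdist[OF assms(2,3,4) _ \<open>c \<in> P\<close> _ \<open>finite C\<close>] assms(3,6,7) p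
      by auto
    also have "kdist d P c l \<le> kdist d D c l"
      using kdist_antimono[OF assms(2) D(1)] D(2) assms(6) by simp
    also have "\<dots> \<le> ?r" using Dr[OF \<open>c \<in> P\<close>] .
    finally show ?thesis using \<open>d p c \<le> 2 * ?r\<close> by simp
  qed
  moreover have "P \<noteq> {}" using assms(5,6,7) by auto
  ultimately show ?thesis using assms(2) by (subst Max_le_iff) auto
qed

end
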